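(* There is an absolute constant $C_0\ge 3\times10^3$ such that the following holds. Let $k\ge2$, $r\ge0$ be integers and $n\ge C_0(r+1)^3(k+r)k^2$. Suppose $\mathcal F\subseteq\binom{[n]}{k}$ has size $|\mathcal F|=\sum_{i=1}^{r}\binom{n-i}{k-1}+\delta\binom{n-(r+1)}{k-1}$ for some $\delta\in\left[\frac{150k^3}{n},1\right]$, and $\mathcal I(\mathcal F)\ge\frac{r+\delta^2}{(r+\delta)^2}|\mathcal F|^2$. Then there exists $x\in[n]$ with $|\mathcal F(x)|\ge\frac{|\mathcal F|}{4(r+1)}$.
   Context: $\mathcal F(x)=\{F\in\mathcal F:x\in F\}$; $\mathcal I(\mathcal F)=\sum_{A,B\in\mathcal F}|A\cap B|=\sum_{x\in[n]}|\mathcal F(x)|^2$ (ordered pairs). *)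

theory Defs
  imports Main Complex_Main
begin

definition star :: "nat set set \<Rightarrow> nat \<Rightarrow> nat set set" where
  "star F x = {A \<in> F. x \<in> A}"

definition intersections :: "nat set set \<Rightarrow> nat" where
  "intersections F = (\<Sum>A\<in>F. \<Sum>B\<in>F. card (A \<inter> B))"

end

theory Submission
  imports Defs
begin

text \<open>
  Write d(x) = |F(x)| and e = C(n-2, k-2), the number of k-sets through two given points.
  Counting, inside each member of F, the pairs of points of a set S gives the Bonferroni bound
  sum of d(x) over S \<le> |F| + |S|^2 e. Hence fewer than t = 8k(r+1) points have degree above
  |F|/t + t e, and their degrees sum to at most |F| + t^2 e. If every degree were below
  |F|/(4(r+1)), splitting I(F) = sum of d(x)^2 over heavy and light points would give
  (r+1) I(F) \<le> (3/8 + 24/75) |F|^2, since the size hypothesis forces |F| \<ge> 75 k^2 (r+1)^2 e.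
  But (r+\<delta>^2)/(r+\<delta>)^2 \<ge> 1/(r+1), so the hypothesis on I(F) gives I(F) \<ge> |F|^2/(r+1).
\<close>

lemma card_star_eq_sum: "finite F \<Longrightarrow> card (star F x) = (\<Sum>A\<in>F. of_bool (x \<in> A))"
  by (simp add: star_def Int_def conj_commute)

lemma sum_card_star_eq_sum_card_Int:
  assumes "finite F" "finite S"
  shows "(\<Sum>x\<in>S. card (star F x)) = (\<Sum>A\<in>F. card (A \<inter> S))"
proof -
  have "(\<Sum>x\<in>S. card (star F x)) = (\<Sum>A\<in>F. \<Sum>x\<in>S. of_bool (x \<in> A))"
    by (simp add: card_star_eq_sum[OF assms(1)] sum.swap[of _ S])
  also have "\<dots> = (\<Sum>A\<in>F. card (A \<inter> S))"
    using assms(2) by (intro sum.cong) (auto simp: Int_commute Int_def)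
  finally show ?thesis .
qed

lemma intersections_eq_sum_card_star_squared:
  assumes "finite V" "F \<subseteq> Pow V"
  shows "intersections F = (\<Sum>x\<in>V. card (star F x)^2)"
proof -
  have finF: "finite F"
    using assms by (meson finite_Pow_iff finite_subset)
  have "card (A \<inter> B) = (\<Sum>x\<in>V. of_bool (x \<in> A) * of_bool (x \<in> B))" if "A \<in> F" for A B
  proof -
    have "V \<inter> {x. x \<in> A} \<inter> {x. x \<in> B} = A \<inter> B" using that assms(2) by auto
    then show ?thesis using assms(1) by simp
  qed
  then have "intersections F = (\<Sum>A\<in>F. \<Sum>B\<in>F. \<Sum>x\<in>V. of_bool (x \<in> A) * of_bool (x \<in> B))"
    unfolding intersections_def by simp
  also have "\<dots> = (\<Sum>A\<in>F. \<Sum>x\<in>V. \<Sum>B\<in>F. of_bool (x \<in> A) * of_bool (x \<in> B))"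
    by (intro sum.cong refl sum.swap)
  also have "\<dots> = (\<Sum>x\<in>V. \<Sum>A\<in>F. \<Sum>B\<in>F. of_bool (x \<in> A) * of_bool (x \<in> B))"
    by (rule sum.swap)
  also have "\<dots> = (\<Sum>x\<in>V. (\<Sum>A\<in>F. of_bool (x \<in> A)) * (\<Sum>B\<in>F. of_bool (x \<in> B)))"
    by (simp only: sum_product)
  also have "\<dots> = (\<Sum>x\<in>V. card (star F x)^2)"
    by (simp add: card_star_eq_sum[OF finF] power2_eq_square)
  finally show ?thesis .
qed

lemma sum_card_star_uniform:
  assumes "finite V" "F \<subseteq> {A. A \<subseteq> V \<and> card A = k}"
  shows "(\<Sum>x\<in>V. card (star F x)) = k * card F"
proof -
  have "finite F"
    using assms by (auto intro: finite_subset[of _ "Pow V"])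
  then have "(\<Sum>x\<in>V. card (star F x)) = (\<Sum>A\<in>F. card (A \<inter> V))"
    using assms(1) by (rule sum_card_star_eq_sum_card_Int)
  also have "\<dots> = (\<Sum>A\<in>F. k)"
    using assms(2) by (intro sum.cong) (auto simp: Int_absorb2)
  finally show ?thesis by simp
qed

lemma card_codegree_le:
  assumes "finite V" "F \<subseteq> {A. A \<subseteq> V \<and> card A = k}" "x \<noteq> y"
  shows "card {A\<in>F. x \<in> A \<and> y \<in> A} \<le> (card V - 2) choose (k - 2)"
proof (cases "x \<in> V \<and> y \<in> V")
  case False
  then have "{A\<in>F. x \<in> A \<and> y \<in> A} = {}" using assms(2) by blast
  then show ?thesis by (metis card.empty zero_le)
next
  case True
  let ?G = "{B. B \<subseteq> V - {x, y} \<and> card B = k - 2}"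
  have "card (V - {x, y}) = card V - 2"
    using True assms(1,3) by (simp add: card_Diff_subset)
  then have card_G: "card ?G = (card V - 2) choose (k - 2)"
    using n_subsets[of "V - {x, y}" "k - 2"] assms(1) by simp
  have "inj_on (\<lambda>A. A - {x, y}) {A\<in>F. x \<in> A \<and> y \<in> A}"
    by (rule inj_onI) blast
  moreover have "(\<lambda>A. A - {x, y}) ` {A\<in>F. x \<in> A \<and> y \<in> A} \<subseteq> ?G"
  proof clarify
    fix A assume "A \<in> F" "x \<in> A" "y \<in> A"
    with assms have "finite A" "A \<subseteq> V" "card A = k" by (auto intro: finite_subset)
    with \<open>x \<in> A\<close> \<open>y \<in> A\<close> assms(3) show "A - {x, y} \<subseteq> V - {x, y} \<and> card (A - {x, y}) = k - 2"
      by (auto simp: card_Diff_subset)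
  qed
  ultimately show ?thesis
    using assms(1) card_G card_inj_on_le[of "\<lambda>A. A - {x, y}" _ ?G] by simp
qed

lemma card_Int_le_Suc_sum_pairs:
  assumes "finite S"
  shows "card (A \<inter> S) \<le> 1 + (\<Sum>x\<in>S. \<Sum>y\<in>S - {x}. of_bool (x \<in> A \<and> y \<in> A))"
proof (cases "A \<inter> S = {}")
  case False
  then obtain x where x: "x \<in> A" "x \<in> S" by auto
  have "card (A \<inter> S) > 0"
    using x assms by (auto simp: card_gt_0_iff)
  then have "card (A \<inter> S) = 1 + card (A \<inter> S - {x})"
    using x by (simp add: card_Diff_subset)
  also have "card (A \<inter> S - {x}) = (\<Sum>y\<in>S - {x}. of_bool (x \<in> A \<and> y \<in> A))"
  proof -
    have "(S - {x}) \<inter> {y. x \<in> A \<and> y \<in> A} = A \<inter> S - {x}" using x by auto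
    then show ?thesis using assms by simp
  qed
  also have "\<dots> \<le> (\<Sum>x\<in>S. \<Sum>y\<in>S - {x}. of_bool (x \<in> A \<and> y \<in> A))"
    using x assms by (intro member_le_sum) auto
  finally show ?thesis by simp
qed simp

lemma sum_card_star_le:
  assumes "finite V" "F \<subseteq> {A. A \<subseteq> V \<and> card A = k}" "finite S"
  shows "(\<Sum>x\<in>S. card (star F x)) \<le> card F + card S ^ 2 * ((card V - 2) choose (k - 2))"
proof -
  let ?e = "(card V - 2) choose (k - 2)"
  have fin: "finite F"
    using assms by (auto intro: finite_subset[of _ "Pow V"])
  have "(\<Sum>x\<in>S. card (star F x)) = (\<Sum>A\<in>F. card (A \<inter> S))"
    using fin assms(3) by (rule sum_card_star_eq_sum_card_Int)
  also have "\<dots> \<le> (\<Sum>A\<in>F. 1 + (\<Sum>x\<in>S. \<Sum>y\<in>S - {x}. of_bool (x \<in> A \<and> y \<in> A)))"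
    using assms(3) by (intro sum_mono card_Int_le_Suc_sum_pairs)
  also have "\<dots> = card F + (\<Sum>A\<in>F. \<Sum>x\<in>S. \<Sum>y\<in>S - {x}. of_bool (x \<in> A \<and> y \<in> A))"
    by (simp only: sum.distrib card_eq_sum)
  also have "\<dots> = card F + (\<Sum>x\<in>S. \<Sum>y\<in>S - {x}. \<Sum>A\<in>F. of_bool (x \<in> A \<and> y \<in> A))"
    by (subst sum.swap) (simp only: sum.swap[of _ F])
  also have "\<dots> = card F + (\<Sum>x\<in>S. \<Sum>y\<in>S - {x}. card {A\<in>F. x \<in> A \<and> y \<in> A})"
    using fin by (simp add: Int_def)
  also have "\<dots> \<le> card F + (\<Sum>x\<in>S. \<Sum>y\<in>S - {x}. ?e)"
    using assms by (intro add_left_mono sum_mono card_codegree_le) auto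
  also have "\<dots> \<le> card F + (\<Sum>x\<in>S. \<Sum>y\<in>S. ?e)"
    using assms(3) by (intro add_left_mono sum_mono sum_mono2) auto
  also have "\<dots> = card F + card S ^ 2 * ?e"
    by (simp add: power2_eq_square)
  finally show ?thesis .
qed

lemma card_above_threshold_less:
  fixes d :: "'a \<Rightarrow> real" and f e :: real and t :: nat
  assumes bound: "\<And>S. finite S \<Longrightarrow> S \<subseteq> V \<Longrightarrow> sum d S \<le> f + real (card S) ^ 2 * e"
    and "0 < t"
  shows "card {x\<in>V. f / t + t * e < d x} < t"
proof (rule ccontr)
  let ?\<theta> = "f / t + t * e"
  assume "\<not> card {x\<in>V. ?\<theta> < d x} < t"
  then obtain S where S: "S \<subseteq> {x\<in>V. ?\<theta> < d x}" "card S = t"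
    by (meson not_less obtain_subset_with_card_n)
  with \<open>0 < t\<close> have "finite S" "S \<noteq> {}"
    using card_ge_0_finite by auto
  have "f + real t ^ 2 * e = (\<Sum>x\<in>S. ?\<theta>)"
    using S(2) \<open>0 < t\<close> by (simp add: field_simps power2_eq_square)
  also have "\<dots> < sum d S"
    using S(1) \<open>finite S\<close> \<open>S \<noteq> {}\<close> by (intro sum_strict_mono) auto
  also have "\<dots> \<le> f + real t ^ 2 * e"
    using bound[OF \<open>finite S\<close>] S by auto
  finally show False by simp
qed

lemma sum_square_le_heavy_light:
  fixes d :: "'a \<Rightarrow> real"
  assumes "finite V" "\<And>x. x \<in> V \<Longrightarrow> 0 \<le> d x" "\<And>x. x \<in> V \<Longrightarrow> d x \<le> m" "0 \<le> \<theta>"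
  shows "(\<Sum>x\<in>V. d x ^ 2) \<le> m * (\<Sum>x\<in>{x\<in>V. \<theta> < d x}. d x) + \<theta> * (\<Sum>x\<in>V. d x)"
proof -
  let ?H = "{x\<in>V. \<theta> < d x}"
  have "(\<Sum>x\<in>V. d x ^ 2) = (\<Sum>x\<in>V - ?H. d x ^ 2) + (\<Sum>x\<in>?H. d x ^ 2)"
    using assms(1) by (intro sum.subset_diff) auto
  also have "\<dots> \<le> (\<Sum>x\<in>V - ?H. \<theta> * d x) + (\<Sum>x\<in>?H. m * d x)"
  proof (intro add_mono sum_mono)
    show "d x ^ 2 \<le> \<theta> * d x" if "x \<in> V - ?H" for x
      using that assms(2) by (auto simp: power2_eq_square intro: mult_right_mono)
    show "d x ^ 2 \<le> m * d x" if "x \<in> ?H" for x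
      using that assms(2,3) by (auto simp: power2_eq_square intro: mult_right_mono)
  qed
  also have "(\<Sum>x\<in>V - ?H. \<theta> * d x) \<le> (\<Sum>x\<in>V. \<theta> * d x)"
    using assms by (intro sum_mono2) auto
  finally show ?thesis
    by (simp add: sum_distrib_left)
qed

lemma sum_square_le_of_sum_subset_le:
  fixes d :: "'a \<Rightarrow> real" and f e :: real and t :: nat
  assumes "finite V" "\<And>x. x \<in> V \<Longrightarrow> 0 \<le> d x" "\<And>x. x \<in> V \<Longrightarrow> d x \<le> m"
    and bound: "\<And>S. finite S \<Longrightarrow> S \<subseteq> V \<Longrightarrow> sum d S \<le> f + real (card S) ^ 2 * e"
    and "0 < t" "0 \<le> f" "0 \<le> e" "0 \<le> m"
  shows "(\<Sum>x\<in>V. d x ^ 2) \<le> m * (f + real t ^ 2 * e) + (f / t + t * e) * (\<Sum>x\<in>V. d x)"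
proof -
  let ?\<theta> = "f / t + t * e"
  let ?H = "{x\<in>V. ?\<theta> < d x}"
  have "card ?H < t"
    using bound \<open>0 < t\<close> by (rule card_above_threshold_less)
  then have "real (card ?H) ^ 2 * e \<le> real t ^ 2 * e"
    using \<open>0 \<le> e\<close> by (intro mult_right_mono power_mono) auto
  then have "(\<Sum>x\<in>?H. d x) \<le> f + real t ^ 2 * e"
    using bound[of ?H] assms(1) by force
  moreover have "(\<Sum>x\<in>V. d x ^ 2) \<le> m * (\<Sum>x\<in>?H. d x) + ?\<theta> * (\<Sum>x\<in>V. d x)"
    using assms by (intro sum_square_le_heavy_light) auto
  ultimately show ?thesis
    using mult_left_mono[OF _ \<open>0 \<le> m\<close>] by (smt (verit))
qed

lemma sq_le_Suc_mult_of_ratio_le: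
  fixes r \<delta> N I :: real
  assumes "0 \<le> r" "0 < \<delta>" "(r + \<delta>\<^sup>2) / (r + \<delta>)\<^sup>2 * N\<^sup>2 \<le> I"
  shows "N\<^sup>2 \<le> (r + 1) * I"
proof -
  have "(r + \<delta>\<^sup>2) * (r + 1) - (r + \<delta>)\<^sup>2 = r * (1 - \<delta>)\<^sup>2"
    by (simp add: power2_eq_square algebra_simps)
  then have "(r + \<delta>)\<^sup>2 \<le> (r + \<delta>\<^sup>2) * (r + 1)"
    using assms(1) by (smt (verit) zero_le_mult_iff zero_le_power2)
  then have "1 / (r + 1) \<le> (r + \<delta>\<^sup>2) / (r + \<delta>)\<^sup>2"
    using assms(1,2) by (simp add: field_simps)
  then have "1 / (r + 1) * N\<^sup>2 \<le> I"
    using assms(3) by (meson mult_right_mono order_trans zero_le_power2)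
  then show ?thesis
    using assms(1) by (simp add: field_simps)
qed

lemma diff1_mult_binomial_le:
  assumes "2 \<le> k"
  shows "(n - 1) * ((n - 2) choose (k - 2)) \<le> k * ((n - 1) choose (k - 1))"
proof -
  have "(k - 1) * ((n - 1) choose (k - 1)) = (n - 1) * ((n - 2) choose (k - 2))"
    using times_binomial_minus1_eq[of "k - 1" "n - 1"] assms
    by (simp only: diff_diff_add one_add_one)
  then show ?thesis
    by (metis diff_le_self mult_le_mono1)
qed

lemma real_le_sq_mult_cube:
  assumes "1 \<le> k"
  shows "real k \<le> (real r + 1)\<^sup>2 * real k ^ 3"
proof -
  have "real k * 1 \<le> real k * ((real r + 1)\<^sup>2 * real k ^ 2)"
    using assms by (intro mult_left_mono mult_ge1_I one_le_power) auto
  then show ?thesis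
    by (simp add: power2_eq_square power3_eq_cube mult_ac)
qed

lemma sq_mult_cube_le_cube_mult_sq:
  "150 * (real r + 1)\<^sup>2 * real k ^ 3 \<le> 3000 * (real r + 1) ^ 3 * real (k + r) * real k ^ 2"
proof -
  have "150 * (real r + 1)\<^sup>2 * real k ^ 3 = 150 * real k ^ 2 * ((real r + 1)\<^sup>2 * real k)"
    by algebra
  also have "\<dots> \<le> 150 * real k ^ 2 * ((real r + 1) ^ 3 * real (k + r))"
    by (intro mult_left_mono mult_mono power_increasing) auto
  also have "\<dots> \<le> 3000 * (real r + 1) ^ 3 * real (k + r) * real k ^ 2"
    by (simp add: mult_ac)
  finally show ?thesis .
qed

lemma family_size_ge:
  fixes \<delta> :: real
  assumes "2 \<le> k" and n: "150 * (real r + 1)\<^sup>2 * real k ^ 3 \<le> real n"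
    and \<delta>: "150 * real k ^ 3 / real n \<le> \<delta>"
  shows "75 * real k ^ 2 * (real r + 1)\<^sup>2 * real ((n - 2) choose (k - 2))
           \<le> (\<Sum>i=1..r. real ((n - i) choose (k - 1))) + \<delta> * real ((n - (r + 1)) choose (k - 1))"
proof -
  define e where "e = real ((n - 2) choose (k - 2))"
  define c where "c = real ((n - 1) choose (k - 1))"
  have "1 \<le> (real r + 1)\<^sup>2 * real k ^ 3"
    using real_le_sq_mult_cube[of k r] \<open>2 \<le> k\<close> by simp
  with n have n_ge: "150 \<le> real n" "75 * (real r + 1)\<^sup>2 * real k ^ 3 \<le> real n - 1"
    by linarith+
  have "real (n - 1) * e \<le> real k * c"
    unfolding e_def c_def using diff1_mult_binomial_le[OF \<open>2 \<le> k\<close>, of n] of_nat_mono by fastforce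
  then have ec: "(real n - 1) * e \<le> real k * c"
    using n_ge by simp
  have "0 \<le> e" "0 \<le> c" "0 < real k"
    using \<open>2 \<le> k\<close> by (auto simp: e_def c_def)
  show ?thesis
  proof (cases "r = 0")
    case True
    have "75 * real k ^ 2 * e * real n \<le> 75 * real k ^ 2 * e * (2 * (real n - 1))"
      using n_ge \<open>0 \<le> e\<close> by (intro mult_left_mono) auto
    also have "\<dots> = 150 * real k ^ 2 * ((real n - 1) * e)"
      by simp
    also have "\<dots> \<le> 150 * real k ^ 2 * (real k * c)"
      using ec by (intro mult_left_mono) auto
    finally have "75 * real k ^ 2 * e \<le> 150 * real k ^ 3 / real n * c"
      using n_ge by (simp add: field_simps power3_eq_cube power2_eq_square)
    also have "\<dots> \<le> \<delta> * c"
      using \<delta> \<open>0 \<le> c\<close> by (rule mult_right_mono)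
    finally show ?thesis
      using True by (simp add: e_def c_def)
  next
    case False
    have "real k * (75 * real k ^ 2 * (real r + 1)\<^sup>2 * e) = 75 * (real r + 1)\<^sup>2 * real k ^ 3 * e"
      by (simp add: power3_eq_cube power2_eq_square)
    also have "\<dots> \<le> (real n - 1) * e"
      using n_ge \<open>0 \<le> e\<close> by (intro mult_right_mono) auto
    also have "\<dots> \<le> real k * c"
      by (rule ec)
    finally have "75 * real k ^ 2 * (real r + 1)\<^sup>2 * e \<le> c"
      using \<open>0 < real k\<close> by simp
    also have "c \<le> (\<Sum>i=1..r. real ((n - i) choose (k - 1)))"
      unfolding c_def using False by (intro member_le_sum[where f = "\<lambda>i. real ((n - i) choose (k - 1))"]) auto
    also have "\<dots> \<le> (\<Sum>i=1..r. real ((n - i) choose (k - 1))) + \<delta> * real ((n - (r + 1)) choose (k - 1))"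
      using \<delta> by (simp add: order_trans[OF _ \<delta>])
    finally show ?thesis
      by (simp add: e_def)
  qed
qed

lemma exists_large_star:
  assumes "finite V" and F: "F \<subseteq> {A. A \<subseteq> V \<and> card A = k}" and "0 < k" "0 < card F"
    and size: "75 * real k ^ 2 * (real r + 1)\<^sup>2 * real ((card V - 2) choose (k - 2)) \<le> real (card F)"
    and dense: "real (card F) ^ 2 \<le> (real r + 1) * real (intersections F)"
  shows "\<exists>x\<in>V. real (card F) / (4 * (real r + 1)) \<le> real (card (star F x))"
proof (rule ccontr)
  define N where "N = real (card F)"
  define e where "e = real ((card V - 2) choose (k - 2))"
  define m where "m = N / (4 * (real r + 1))"
  define t where "t = 8 * k * (r + 1)"
  define d where "d x = real (card (star F x))" for x
  assume "\<not> (\<exists>x\<in>V. real (card F) / (4 * (real r + 1)) \<le> real (card (star F x)))"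
  then have d_le: "d x \<le> m" if "x \<in> V" for x
    using that by (auto simp: d_def m_def N_def)
  have sum_d_le: "sum d S \<le> N + real (card S) ^ 2 * e" if "finite S" for S
    using of_nat_mono[OF sum_card_star_le[OF \<open>finite V\<close> F that]] by (simp add: d_def N_def e_def)
  have "0 < N" "0 \<le> e" "0 < t"
    using \<open>0 < k\<close> \<open>0 < card F\<close> by (auto simp: N_def e_def t_def)
  have t_real: "real t = 8 * real k * (real r + 1)"
    by (simp add: t_def algebra_simps)
  have m_eq: "(real r + 1) * m = N / 4"
    by (simp add: m_def field_simps add_pos_nonneg)
  have t_eq: "(real r + 1) * real k / real t = 1 / 8"
    using \<open>0 < k\<close> by (simp add: t_real)
  have "real (intersections F) = (\<Sum>x\<in>V. d x ^ 2)"
    using F by (simp add: intersections_eq_sum_card_star_squared[OF \<open>finite V\<close>] d_def subset_iff)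
  also have "\<dots> \<le> m * (N + real t ^ 2 * e) + (N / t + t * e) * (\<Sum>x\<in>V. d x)"
    using \<open>finite V\<close> d_le sum_d_le \<open>0 < t\<close> \<open>0 < N\<close> \<open>0 \<le> e\<close>
    by (intro sum_square_le_of_sum_subset_le) (auto simp: d_def m_def)
  also have "(\<Sum>x\<in>V. d x) = real k * N"
    using sum_card_star_uniform[OF \<open>finite V\<close> F] unfolding d_def N_def
    by (metis of_nat_mult of_nat_sum)
  finally have "(real r + 1) * real (intersections F)
      \<le> (real r + 1) * (m * (N + real t ^ 2 * e) + (N / t + t * e) * (real k * N))"
    by (intro mult_left_mono) auto
  also have "\<dots> = (real r + 1) * m * (N + real t ^ 2 * e) + (real r + 1) * real k / real t * N\<^sup>2
      + (real r + 1) * real t * real k * e * N"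
    by (simp add: algebra_simps power2_eq_square)
  also have "\<dots> = N / 4 * (N + real t ^ 2 * e) + 1 / 8 * N\<^sup>2 + (real r + 1) * real t * real k * e * N"
    by (simp only: m_eq t_eq)
  also have "\<dots> = 3 / 8 * N\<^sup>2 + 24 * (real k ^ 2 * (real r + 1)\<^sup>2 * e) * N"
    by (simp add: t_real algebra_simps power2_eq_square)
  also have "\<dots> \<le> 3 / 8 * N\<^sup>2 + 24 / 75 * N * N"
    using size \<open>0 < N\<close> by (simp add: N_def e_def)
  finally show False
    using dense mult_pos_pos[OF \<open>0 < N\<close> \<open>0 < N\<close>] unfolding N_def power2_eq_square by linarith
qed

theorem lemma2p1:
  "\<exists>C0::real. C0 \<ge> 3000 \<and>
    (\<forall>(k::nat) (r::nat) (n::nat) (F::nat set set) (\<delta>::real).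
      k \<ge> 2 \<longrightarrow>
      real n \<ge> C0 * (real r + 1)^3 * real (k + r) * (real k)^2 \<longrightarrow>
      F \<subseteq> {A. A \<subseteq> {1..n} \<and> card A = k} \<longrightarrow>
      150 * (real k)^3 / real n \<le> \<delta> \<longrightarrow> \<delta> \<le> 1 \<longrightarrow>
      real (card F) = (\<Sum>i=1..r. real ((n - i) choose (k - 1)))
                       + \<delta> * real ((n - (r + 1)) choose (k - 1)) \<longrightarrow>
      real (intersections F) \<ge> (real r + \<delta>^2) / (real r + \<delta>)^2 * (real (card F))^2 \<longrightarrow>
      (\<exists>x\<in>{1..n}. real (card (star F x)) \<ge> real (card F) / (4 * (real r + 1))))"
proof (intro exI[of _ 3000] conjI allI impI order_refl)
  fix k r n :: nat and F :: "nat set set" and \<delta> :: real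
  assume "2 \<le> k" and n: "3000 * (real r + 1) ^ 3 * real (k + r) * real k ^ 2 \<le> real n"
    and F: "F \<subseteq> {A. A \<subseteq> {1..n} \<and> card A = k}" and \<delta>: "150 * real k ^ 3 / real n \<le> \<delta>"
    and card_F: "real (card F) = (\<Sum>i=1..r. real ((n - i) choose (k - 1)))
                                  + \<delta> * real ((n - (r + 1)) choose (k - 1))"
    and dense: "(real r + \<delta>^2) / (real r + \<delta>)^2 * real (card F) ^ 2 \<le> real (intersections F)"
  have n_ge: "150 * (real r + 1)\<^sup>2 * real k ^ 3 \<le> real n"
    using sq_mult_cube_le_cube_mult_sq[of r k] n by linarith
  with \<open>2 \<le> k\<close> \<delta> card_F
  have size: "75 * real k ^ 2 * (real r + 1)\<^sup>2 * real ((n - 2) choose (k - 2)) \<le> real (card F)"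
    using family_size_ge by simp
  have "real k \<le> 150 * (real r + 1)\<^sup>2 * real k ^ 3"
    using real_le_sq_mult_cube[of k r] \<open>2 \<le> k\<close> by simp
  with n_ge have "k \<le> n"
    by linarith
  then have "0 < 75 * real k ^ 2 * (real r + 1)\<^sup>2 * real ((n - 2) choose (k - 2))"
    using \<open>2 \<le> k\<close> by simp
  with size have "0 < card F"
    by linarith
  have "0 < 150 * real k ^ 3 / real n"
    using \<open>k \<le> n\<close> \<open>2 \<le> k\<close> by simp
  with \<delta> have "0 < \<delta>"
    by linarith
  then have "real (card F) ^ 2 \<le> (real r + 1) * real (intersections F)"
    using sq_le_Suc_mult_of_ratio_le[of "real r" \<delta>] dense by simp
  then show "\<exists>x\<in>{1..n}. real (card F) / (4 * (real r + 1)) \<le> real (card (star F x))"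
    using exists_large_star[of "{1..n}" F k r] F \<open>2 \<le> k\<close> \<open>0 < card F\<close> size by simp
qed

end
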